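(* Let $\phi$ be a nonautonomous random dynamical system (NRDS) on $(\Omega,\mathcal{F},\mathbb{P})$ with finite state space $X$. For $t_0\le t$ let $\Gamma(t,t_0):=\{\omega\in\Omega\mid\phi(t,t_0,x_1,\omega)=\phi(t,t_0,x_2,\omega)\text{ for all }x_1,x_2\in X\}$ and for $t\in\mathbb{R}$, $\omega\in\Omega$ let $A(t,\omega):=\bigcap_{t_0\le t}\phi(t,t_0,X,\omega)$. Consider the statements: (1) There exists $p>0$ such that for any $t\in\mathbb{R}$ there exists $t_0<t$ with $\mathbb{P}(\Gamma(t,t_0))>p$. (2) For any $t\in\mathbb{R}$, $\lim_{t_0\to-\infty}\mathbb{P}(\Gamma(t,t_0))=1$. (3) For any $t\in\mathbb{R}$, $\mathbb{P}(\{\omega\in\Omega\mid \phi(t,t_0,X,\omega)\text{ is a singleton for some }t_0<t\})=1$. (4) For all $t\in\mathbb{R}$ the sets $A(t,\omega)$ are singletons for almost all $\omega\in\Omega$. Then (2), (3), (4) are equivalent to each other and imply (1). If in addition the solutions are stochastically independent on non-overlapping intervals, i.e. $\phi(t,t_0,x,\cdot)$ is independent of $\phi(s,s_0,x,\cdot)$ whenever $[t_0,t)\cap[s_0,s)=\emptyset$, then (1) is equivalent to (2)–(4). If, moreover, the $t_0$ in (1) can be chosen such that $t-t_0$ is bounded uniformly in $t$, then the convergence in (2) has an exponential rate, and the singletons $A(t,\omega)$ also provide a global random forward attractor.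
   Context: Let $\mathbb{R}^2_{\ge}:=\{(t,s)\in\mathbb{R}^2\mid t\ge s\}$. A map $\phi:\mathbb{R}^2_\ge\times X\times\Omega\to X$ ($X$ a Polish space, here finite with the discrete topology) is an NRDS if (i) it is $(\mathcal{B}(\mathbb{R}^2_\ge)\times\mathcal{B}(X)\times\mathcal{F},\mathcal{B}(X))$-measurable; (ii) $\phi(t,t,\cdot,\omega)$ is the identity; (iii) $\phi(t,t_0,x,\omega)=\phi(t,s,\phi(s,t_0,x,\omega),\omega)$ for all $t\ge s\ge t_0$; (iv) $x\mapsto\phi(t,s,x,\omega)$ is continuous. $\phi(t,t_0,B,\omega)$ denotes the image of a set $B\subset X$. On the finite space use $d(x_1,x_2)=1$ if $x_1\neq x_2$, $0$ otherwise, and $\mathrm{dist}(A_1,A_2)=\sup_{a_1\in A_1}\inf_{a_2\in A_2}d(a_1,a_2)$. A compact nonautonomous random set $A=(A(t))_{t\in\mathbb{R}}$ (measurable subsets of $X\times\Omega$ with compact $\omega$-sections $A(t,\omega)$) that is strictly invariant, $\phi(t,t_0,A(t_0,\omega),\omega)=A(t,\omega)$ for all $t\ge t_0$ a.s., is a global random forward attractor if for each $t_0\in\mathbb{R}$, $\lim_{t\to\infty}\mathrm{dist}(\phi(t,t_0,X,\omega),A(t,\omega))=0$ a.s. *)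

theory Defs
  imports "HOL-Probability.Probability"
begin

text \<open>Finite state space: the type 'a :: finite, X = UNIV, with the discrete
  topology / sigma-algebra (count_space UNIV). Continuity in x is automatic.\<close>

definition NRDS :: "'w measure \<Rightarrow> (real \<Rightarrow> real \<Rightarrow> 'a \<Rightarrow> 'w \<Rightarrow> 'a) \<Rightarrow> bool" where
  "NRDS M phi \<longleftrightarrow>
     (\<lambda>((t, s), x, w). phi t s x w) \<in>
        measurable (restrict_space (borel :: (real \<times> real) measure) {(t, s). s \<le> t}
                     \<Otimes>\<^sub>M (count_space UNIV \<Otimes>\<^sub>M M)) (count_space UNIV)
   \<and> (\<forall>t x w. phi t t x w = x)
   \<and> (\<forall>t s t0 x w. t0 \<le> s \<and> s \<le> t \<longrightarrow> phi t t0 x w = phi t s (phi s t0 x w) w)"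

definition Gamma :: "'w measure \<Rightarrow> (real \<Rightarrow> real \<Rightarrow> 'a \<Rightarrow> 'w \<Rightarrow> 'a) \<Rightarrow> real \<Rightarrow> real \<Rightarrow> 'w set" where
  "Gamma M phi t t0 = {w \<in> space M. \<forall>x1 x2. phi t t0 x1 w = phi t t0 x2 w}"

definition pullback_set :: "(real \<Rightarrow> real \<Rightarrow> 'a \<Rightarrow> 'w \<Rightarrow> 'a) \<Rightarrow> real \<Rightarrow> 'w \<Rightarrow> 'a set" where
  "pullback_set phi t w = (\<Inter>t0\<in>{..t}. range (\<lambda>x. phi t t0 x w))"

definition cond1 :: "'w measure \<Rightarrow> (real \<Rightarrow> real \<Rightarrow> 'a \<Rightarrow> 'w \<Rightarrow> 'a) \<Rightarrow> bool" where
  "cond1 M phi \<longleftrightarrow> (\<exists>p>0. \<forall>t. \<exists>t0<t. measure M (Gamma M phi t t0) > p)"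

definition cond2 :: "'w measure \<Rightarrow> (real \<Rightarrow> real \<Rightarrow> 'a \<Rightarrow> 'w \<Rightarrow> 'a) \<Rightarrow> bool" where
  "cond2 M phi \<longleftrightarrow> (\<forall>t. ((\<lambda>t0. measure M (Gamma M phi t t0)) \<longlongrightarrow> 1) at_bot)"

definition cond3 :: "'w measure \<Rightarrow> (real \<Rightarrow> real \<Rightarrow> 'a \<Rightarrow> 'w \<Rightarrow> 'a) \<Rightarrow> bool" where
  "cond3 M phi \<longleftrightarrow>
     (\<forall>t. measure M {w \<in> space M. \<exists>t0<t. is_singleton (range (\<lambda>x. phi t t0 x w))} = 1)"

definition cond4 :: "'w measure \<Rightarrow> (real \<Rightarrow> real \<Rightarrow> 'a \<Rightarrow> 'w \<Rightarrow> 'a) \<Rightarrow> bool" where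
  "cond4 M phi \<longleftrightarrow> (\<forall>t. AE w in M. is_singleton (pullback_set phi t w))"

definition cond1_uniform :: "'w measure \<Rightarrow> (real \<Rightarrow> real \<Rightarrow> 'a \<Rightarrow> 'w \<Rightarrow> 'a) \<Rightarrow> bool" where
  "cond1_uniform M phi \<longleftrightarrow>
     (\<exists>p>0. \<exists>T. \<forall>t. \<exists>t0<t. t - t0 \<le> T \<and> measure M (Gamma M phi t t0) > p)"

definition indep_intervals :: "'w measure \<Rightarrow> (real \<Rightarrow> real \<Rightarrow> 'a \<Rightarrow> 'w \<Rightarrow> 'a) \<Rightarrow> bool" where
  "indep_intervals M phi \<longleftrightarrow>
     (\<forall>I :: (real \<times> real) set.
        (\<forall>i\<in>I. fst i \<le> snd i) \<and>
        (\<forall>i\<in>I. \<forall>j\<in>I. i \<noteq> j \<longrightarrow> {fst i..<snd i} \<inter> {fst j..<snd j} = {}) \<longrightarrow>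
        prob_space.indep_vars M (\<lambda>_. count_space UNIV)
          (\<lambda>i w. (\<lambda>x. phi (snd i) (fst i) x w)) I)"

definition ddist :: "'a \<Rightarrow> 'a \<Rightarrow> real" where
  "ddist x1 x2 = (if x1 = x2 then 0 else 1)"

definition hsdist :: "'a set \<Rightarrow> 'a set \<Rightarrow> real" where
  "hsdist A1 A2 = (SUP a1\<in>A1. INF a2\<in>A2. ddist a1 a2)"

text \<open>Global random forward attractor (compactness of the sections is automatic
  on a finite discrete space).\<close>
definition global_random_forward_attractor ::
  "'w measure \<Rightarrow> (real \<Rightarrow> real \<Rightarrow> 'a \<Rightarrow> 'w \<Rightarrow> 'a) \<Rightarrow> (real \<Rightarrow> 'w \<Rightarrow> 'a set) \<Rightarrow> bool" where
  "global_random_forward_attractor M phi A \<longleftrightarrow>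
     (\<forall>t. {(x, w). w \<in> space M \<and> x \<in> A t w} \<in> sets (count_space UNIV \<Otimes>\<^sub>M M))
   \<and> (AE w in M. \<forall>t0 t. t0 \<le> t \<longrightarrow> (\<lambda>x. phi t t0 x w) ` A t0 w = A t w)
   \<and> (\<forall>t0. AE w in M.
        ((\<lambda>t. hsdist (range (\<lambda>x. phi t t0 x w)) (A t w)) \<longlongrightarrow> 0) at_top)"

end

theory Submission
  imports Defs
begin

(*
  Because X is finite, the images phi(t, t0, X, w) shrink as t0 decreases and hence are
  eventually constant, equal to the pullback set A(t, w). So A(t, w) is a singleton iff
  some phi(t, t0, X, w) is, i.e. iff w lies in the union of the events Gamma(t, t0),
  which increase as t0 decreases; continuity of the measure gives (2) <-> (3) <-> (4).
  Under independence, iterating a choice t |-> t0 from (1) produces n disjoint intervals on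
  each of which synchronisation fails, independently, with probability below 1 - p, so the
  system fails to synchronise on their union with probability at most (1 - p)^n. If the
  steps t - t0 are bounded, n grows linearly in t - t0, which gives the exponential rate;
  and then almost every forward orbit synchronises after finite time, after which it
  coincides with the singleton A(t, w).
*)

lemma eventually_eq_INT_at_bot:
  fixes R :: "real \<Rightarrow> 'a set"
  assumes fin: "\<And>s. finite (R s)"
    and mono: "\<And>s s'. s \<le> s' \<Longrightarrow> s' \<le> t \<Longrightarrow> R s \<subseteq> R s'"
  shows "eventually (\<lambda>s. R s = (\<Inter>s'\<in>{..t}. R s')) at_bot"
proof -
  have "\<exists>s0. s0 \<le> t \<and> (\<forall>s. s \<le> t \<longrightarrow> card (R s0) \<le> card (R s))"
    by (rule ex_has_least_nat[of _ t]) simp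
  then obtain s0 where s0: "s0 \<le> t" and min: "\<And>s. s \<le> t \<Longrightarrow> card (R s0) \<le> card (R s)"
    by blast
  have const: "R s = R s0" if "s \<le> s0" for s
    using that s0 min[of s] mono[of s s0] fin by (intro card_seteq) auto
  have Inter: "R s0 = (\<Inter>s'\<in>{..t}. R s')"
  proof (intro equalityI INT_greatest)
    fix s' assume "s' \<in> {..t}"
    show "R s0 \<subseteq> R s'"
    proof (cases "s' \<le> s0")
      case True
      then show ?thesis using const[OF True] by blast
    next
      case False
      then show ?thesis using \<open>s' \<in> {..t}\<close> by (intro mono) auto
    qed
  next
    show "(\<Inter>s'\<in>{..t}. R s') \<subseteq> R s0"
      using s0 by (intro INT_lower) simp
  qed
  show ?thesis
    unfolding eventually_at_bot_linorder using const Inter by (intro exI[of _ s0]) metis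
qed

lemma tendsto_at_bot_if_antimono_sequence:
  fixes g :: "real \<Rightarrow> real"
  assumes anti: "\<And>x y. x \<le> y \<Longrightarrow> y \<le> c \<Longrightarrow> g y \<le> g x"
    and lim: "(\<lambda>n. g (c - real n)) \<longlonglongrightarrow> L"
  shows "(g \<longlongrightarrow> L) at_bot"
proof -
  have "incseq (\<lambda>n. g (c - real n))"
    unfolding incseq_def by (intro allI impI anti) auto
  then have seq_le: "g (c - real n) \<le> L" for n
    using lim by (rule incseq_le)
  have bound: "g x \<le> L" if "x \<le> c" for x
  proof -
    obtain n :: nat where "c - x \<le> real n"
      using real_arch_simple by blast
    then have "g x \<le> g (c - real n)"
      using that by (intro anti) auto
    then show ?thesis
      using seq_le[of n] by linarith
  qed
  show ?thesis
  proof (rule order_tendstoI)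
    fix a assume "a < L"
    from order_tendstoD(1)[OF lim this] obtain N where "\<And>n. N \<le> n \<Longrightarrow> a < g (c - real n)"
      unfolding eventually_sequentially by blast
    then have "a < g x" if "x \<le> c - real N" for x
      using anti[of x "c - real N"] that by fastforce
    then show "eventually (\<lambda>x. a < g x) at_bot"
      unfolding eventually_at_bot_linorder by blast
  next
    fix b assume "L < b"
    then have "g x < b" if "x \<le> c" for x
      using bound[OF that] by simp
    then show "eventually (\<lambda>x. g x < b) at_bot"
      unfolding eventually_at_bot_linorder by blast
  qed
qed

lemma funpow_le_if_decreasing:
  fixes f :: "real \<Rightarrow> real"
  assumes "\<And>s. f s < s"
  shows "(f ^^ n) t \<le> t"
proof (induction n)
  case (Suc n)
  have "f ((f ^^ n) t) < (f ^^ n) t"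
    by (rule assms)
  with Suc.IH show ?case
    by simp
qed simp

lemma funpow_ge_if_bounded_step:
  fixes f :: "real \<Rightarrow> real"
  assumes "\<And>s. s - f s \<le> T"
  shows "t - real n * T \<le> (f ^^ n) t"
proof (induction n)
  case (Suc n)
  then show ?case
    using assms[of "(f ^^ n) t"] by (simp add: algebra_simps)
qed simp

lemma power_nat_floor_le_exp:
  fixes q T x :: real
  assumes q: "0 < q" "q < 1" and "0 < T" "0 \<le> x"
  shows "q ^ nat \<lfloor>x / T\<rfloor> \<le> exp (- (- ln q / T) * x) / q"
proof -
  define n where "n = nat \<lfloor>x / T\<rfloor>"
  have "x / T - 1 \<le> real n"
    using assms by (simp add: n_def)
  moreover have "ln q < 0"
    using q by simp
  ultimately have exponent: "real n * ln q \<le> (x / T - 1) * ln q"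
    by (intro mult_right_mono_neg) auto
  have "q ^ n = exp (real n * ln q)"
    using q by (simp add: exp_of_nat_mult)
  also have "\<dots> \<le> exp ((x / T - 1) * ln q)"
    using exponent by simp
  also have "\<dots> = exp (- (- ln q / T) * x) / q"
    using q \<open>0 < T\<close> by (simp add: exp_diff left_diff_distrib)
  finally show ?thesis
    by (simp add: n_def)
qed

lemma (in prob_space) prob_eq_1_if_geometric_bound:
  fixes q :: real
  assumes bound: "\<And>n. 1 - C * q ^ n \<le> prob A" and q: "0 \<le> q" "q < 1"
  shows "prob A = 1"
proof -
  have "(\<lambda>n. 1 - C * q ^ n) \<longlonglongrightarrow> 1 - C * 0"
    using q by (intro tendsto_intros) simp
  then have "(\<lambda>n. 1 - C * q ^ n) \<longlonglongrightarrow> 1"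
    by simp
  then have "1 \<le> prob A"
    by (rule LIMSEQ_le_const2) (use bound in auto)
  with prob_le_1 show ?thesis
    by (rule antisym)
qed

locale nrds = prob_space +
  fixes phi :: "real \<Rightarrow> real \<Rightarrow> 's::finite \<Rightarrow> 'a \<Rightarrow> 's"
  assumes NRDS: "NRDS M phi"
begin

lemma phi_cocycle: "t0 \<le> s \<Longrightarrow> s \<le> t \<Longrightarrow> phi t t0 x w = phi t s (phi s t0 x w) w"
  using NRDS by (simp add: NRDS_def)

lemma measurable_phi [measurable]:
  assumes "t0 \<le> t"
  shows "(\<lambda>w. phi t t0 x w) \<in> measurable M (count_space UNIV)"
proof -
  let ?N = "restrict_space (borel :: (real \<times> real) measure) {(t, s). s \<le> t}
    \<Otimes>\<^sub>M (count_space UNIV \<Otimes>\<^sub>M M)"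
  have joint: "(\<lambda>((t, s), x, w). phi t s x w) \<in> measurable ?N (count_space UNIV)"
    using NRDS by (simp add: NRDS_def)
  have at_times: "(\<lambda>w. ((t, t0), x, w)) \<in> measurable M ?N"
    using assms by (intro measurable_Pair measurable_const measurable_ident_sets)
      (auto simp: space_restrict_space)
  from measurable_comp[OF at_times joint] show ?thesis
    by (simp add: o_def)
qed

lemma sets_Gamma:
  assumes "t0 \<le> t"
  shows "Gamma M phi t t0 \<in> events"
  unfolding Gamma_def using assms by measurable

lemma Gamma_mono:
  assumes "t0 \<le> s1" "s1 \<le> s2" "s2 \<le> t"
  shows "Gamma M phi s2 s1 \<subseteq> Gamma M phi t t0"
proof
  fix w assume "w \<in> Gamma M phi s2 s1"
  then have w: "w \<in> space M" and const: "\<And>x1 x2. phi s2 s1 x1 w = phi s2 s1 x2 w"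
    by (auto simp: Gamma_def)
  have split: "phi t t0 x w = phi t s2 (phi s2 s1 (phi s1 t0 x w) w) w" for x
    using assms phi_cocycle by (metis order.trans)
  have "phi t t0 x1 w = phi t t0 x2 w" for x1 x2
    using split const by metis
  with w show "w \<in> Gamma M phi t t0"
    by (simp add: Gamma_def)
qed

lemma range_phi_antimono:
  "t0' \<le> t0 \<Longrightarrow> t0 \<le> t \<Longrightarrow> range (\<lambda>x. phi t t0' x w) \<subseteq> range (\<lambda>x. phi t t0 x w)"
  using phi_cocycle by blast

lemma mem_Gamma_iff:
  "w \<in> space M \<Longrightarrow> w \<in> Gamma M phi t t0 \<longleftrightarrow> is_singleton (range (\<lambda>x. phi t t0 x w))"
  unfolding Gamma_def is_singleton_def by auto (metis rangeI singletonD)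

lemma eventually_range_phi_eq_pullback_set:
  "eventually (\<lambda>s. range (\<lambda>x. phi t s x w) = pullback_set phi t w) at_bot"
  unfolding pullback_set_def
  by (rule eventually_eq_INT_at_bot) (auto dest: range_phi_antimono)

lemma pullback_set_subset_range: "t0 \<le> t \<Longrightarrow> pullback_set phi t w \<subseteq> range (\<lambda>x. phi t t0 x w)"
  by (auto simp: pullback_set_def)

lemma pullback_set_nonempty: "pullback_set phi t w \<noteq> {}"
  using eventually_happens'[OF trivial_limit_at_bot_linorder
      eventually_range_phi_eq_pullback_set[of t w]] by auto

lemma pullback_set_singleton_iff:
  "is_singleton (pullback_set phi t w) \<longleftrightarrow> (\<exists>t0<t. is_singleton (range (\<lambda>x. phi t t0 x w)))"
proof
  assume "is_singleton (pullback_set phi t w)"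
  moreover have "\<exists>t0. t0 < t \<and> range (\<lambda>x. phi t t0 x w) = pullback_set phi t w"
    using eventually_happens'[OF trivial_limit_at_bot_linorder
        eventually_conj[OF eventually_gt_at_bot eventually_range_phi_eq_pullback_set]] .
  ultimately show "\<exists>t0<t. is_singleton (range (\<lambda>x. phi t t0 x w))"
    by metis
next
  assume "\<exists>t0<t. is_singleton (range (\<lambda>x. phi t t0 x w))"
  then show "is_singleton (pullback_set phi t w)"
    using pullback_set_subset_range pullback_set_nonempty
    by (metis is_singleton_def less_imp_le subset_singletonD)
qed

definition synchronized :: "real \<Rightarrow> 'a set" where
  "synchronized t = {w \<in> space M. \<exists>t0<t. is_singleton (range (\<lambda>x. phi t t0 x w))}"

lemma synchronized_eq_UN_Gamma: "synchronized t = (\<Union>n. Gamma M phi t (t - 1 - real n))"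
proof (intro equalityI subsetI)
  fix w assume "w \<in> synchronized t"
  then obtain t0 where "t0 < t" and w: "w \<in> Gamma M phi t t0"
    using mem_Gamma_iff by (auto simp: synchronized_def)
  obtain n :: nat where "t - 1 - t0 \<le> real n"
    using real_arch_simple by blast
  then have "Gamma M phi t t0 \<subseteq> Gamma M phi t (t - 1 - real n)"
    using \<open>t0 < t\<close> by (intro Gamma_mono) auto
  with w show "w \<in> (\<Union>n. Gamma M phi t (t - 1 - real n))"
    by blast
next
  fix w assume "w \<in> (\<Union>n. Gamma M phi t (t - 1 - real n))"
  then obtain n where w: "w \<in> Gamma M phi t (t - 1 - real n)"
    by blast
  then have "w \<in> space M"
    by (simp add: Gamma_def)
  moreover have "t - 1 - real n < t"
    by simp
  ultimately show "w \<in> synchronized t"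
    using w mem_Gamma_iff unfolding synchronized_def by blast
qed

lemma sets_synchronized: "synchronized t \<in> events"
  unfolding synchronized_eq_UN_Gamma by (intro sets.countable_UN image_subsetI sets_Gamma) simp

lemma Gamma_subset_synchronized: "t0 < t \<Longrightarrow> Gamma M phi t t0 \<subseteq> synchronized t"
  using mem_Gamma_iff by (auto simp: synchronized_def Gamma_def)

lemma tendsto_prob_Gamma_synchronized:
  "((\<lambda>t0. prob (Gamma M phi t t0)) \<longlongrightarrow> prob (synchronized t)) at_bot"
proof (rule tendsto_at_bot_if_antimono_sequence[where c = "t - 1"])
  show "prob (Gamma M phi t y) \<le> prob (Gamma M phi t x)" if "x \<le> y" "y \<le> t - 1" for x y
    using that by (intro finite_measure_mono Gamma_mono sets_Gamma) auto
  show "(\<lambda>n. prob (Gamma M phi t (t - 1 - real n))) \<longlonglongrightarrow> prob (synchronized t)"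
    unfolding synchronized_eq_UN_Gamma
  proof (rule finite_Lim_measure_incseq)
    show "incseq (\<lambda>n. Gamma M phi t (t - 1 - real n))"
      unfolding incseq_def by (intro allI impI Gamma_mono) auto
  qed (intro image_subsetI sets_Gamma, simp)
qed

lemma cond2_iff_cond3: "cond2 M phi \<longleftrightarrow> cond3 M phi"
proof -
  have "((\<lambda>t0. prob (Gamma M phi t t0)) \<longlongrightarrow> 1) at_bot \<longleftrightarrow> prob (synchronized t) = 1" for t
    using tendsto_prob_Gamma_synchronized[of t]
      tendsto_unique[OF trivial_limit_at_bot_linorder] by metis
  then show ?thesis
    unfolding cond2_def cond3_def synchronized_def[symmetric] by simp
qed

lemma cond3_iff_cond4: "cond3 M phi \<longleftrightarrow> cond4 M phi"
proof -
  have "prob (synchronized t) = 1 \<longleftrightarrow> (AE w in M. is_singleton (pullback_set phi t w))" for t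
    using prob_Collect_eq_1[of "\<lambda>w. is_singleton (pullback_set phi t w)"] sets_synchronized[of t]
    unfolding synchronized_def pullback_set_singleton_iff by simp
  then show ?thesis
    unfolding cond3_def cond4_def synchronized_def[symmetric] by simp
qed

lemma cond2_imp_cond1: "cond2 M phi \<Longrightarrow> cond1 M phi"
proof -
  assume "cond2 M phi"
  have "\<exists>t0<t. prob (Gamma M phi t t0) > 1/2" for t
  proof -
    have "\<forall>\<^sub>F t0 in at_bot. prob (Gamma M phi t t0) > 1/2"
      using \<open>cond2 M phi\<close> unfolding cond2_def by (intro order_tendstoD) auto
    then have "\<forall>\<^sub>F t0 in at_bot. prob (Gamma M phi t t0) > 1/2 \<and> t0 < t"
      by (intro eventually_conj eventually_gt_at_bot)
    then show ?thesis
      using eventually_happens'[OF trivial_limit_at_bot_linorder] by blast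
  qed
  then show ?thesis
    unfolding cond1_def by (intro exI[of _ "1/2"]) auto
qed

lemma indep_vars_decreasing_chain:
  assumes ind: "indep_intervals M phi" and dec: "\<And>k. \<tau> (Suc k) < \<tau> k"
  shows "indep_vars (\<lambda>_. count_space UNIV) (\<lambda>i w x. phi (snd i) (fst i) x w)
    ((\<lambda>k. (\<tau> (Suc k), \<tau> k)) ` K)"
proof (rule ind[unfolded indep_intervals_def, rule_format], intro conjI ballI impI)
  have le: "\<tau> l \<le> \<tau> k" if "k \<le> l" for k l
    using lift_Suc_antimono_le[of \<tau>] dec that by (meson less_imp_le)
  fix i j assume "i \<in> (\<lambda>k. (\<tau> (Suc k), \<tau> k)) ` K" "j \<in> (\<lambda>k. (\<tau> (Suc k), \<tau> k)) ` K" "i \<noteq> j"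
  then obtain k l where i: "i = (\<tau> (Suc k), \<tau> k)" and j: "j = (\<tau> (Suc l), \<tau> l)" and "k \<noteq> l"
    by auto
  then consider "Suc k \<le> l" | "Suc l \<le> k"
    by linarith
  then show "{fst i..<snd i} \<inter> {fst j..<snd j} = {}"
  proof cases
    case 1
    then show ?thesis
      using le[OF 1] by (auto simp: i j)
  next
    case 2
    then show ?thesis
      using le[OF 2] by (auto simp: i j)
  qed
qed (use dec in \<open>auto simp: less_imp_le\<close>)

lemma prob_INT_not_Gamma_chain:
  assumes ind: "indep_intervals M phi" and dec: "\<And>k. \<tau> (Suc k) < \<tau> k" and "n > 0"
  shows "prob (\<Inter>k<n. space M - Gamma M phi (\<tau> k) (\<tau> (Suc k)))
    = (\<Prod>k<n. 1 - prob (Gamma M phi (\<tau> k) (\<tau> (Suc k))))"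
proof -
  define I where "I k = (\<tau> (Suc k), \<tau> k)" for k
  define X where "X i w = (\<lambda>x. phi (snd i) (fst i) x w)" for i :: "real \<times> real" and w
  define nonconstant where "nonconstant = {g :: 's \<Rightarrow> 's. \<exists>x1 x2. g x1 \<noteq> g x2}"
  have "inj_on I {..<n}"
    using lift_Suc_mono_less[of "\<lambda>k. - \<tau> k"] dec
    unfolding I_def by (intro inj_onI) (metis less_irrefl nat_neq_iff prod.inject neg_less_iff_less)
  have preimage: "X (I k) -` nonconstant \<inter> space M = space M - Gamma M phi (\<tau> k) (\<tau> (Suc k))" for k
    by (auto simp: X_def I_def nonconstant_def Gamma_def)
  have "prob (\<Inter>k<n. space M - Gamma M phi (\<tau> k) (\<tau> (Suc k)))
      = prob (\<Inter>i\<in>I ` {..<n}. X i -` nonconstant \<inter> space M)"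
    by (simp only: image_image preimage)
  also have "\<dots> = (\<Prod>i\<in>I ` {..<n}. prob (X i -` nonconstant \<inter> space M))"
    using indep_vars_decreasing_chain[of \<tau> "{..<n}", OF ind dec] \<open>n > 0\<close>
    unfolding I_def X_def by (intro indep_varsD_finite) auto
  also have "\<dots> = (\<Prod>k<n. 1 - prob (Gamma M phi (\<tau> k) (\<tau> (Suc k))))"
    using dec by (simp add: prod.reindex[OF \<open>inj_on I {..<n}\<close>] preimage prob_compl sets_Gamma less_imp_le)
  finally show ?thesis .
qed

lemma prob_not_Gamma_le_prod:
  assumes ind: "indep_intervals M phi" and dec: "\<And>k. \<tau> (Suc k) < \<tau> k"
  shows "1 - prob (Gamma M phi (\<tau> 0) (\<tau> n)) \<le> (\<Prod>k<n. 1 - prob (Gamma M phi (\<tau> k) (\<tau> (Suc k))))"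
proof (cases "n = 0")
  case True
  then show ?thesis
    by simp
next
  case False
  have le: "\<tau> l \<le> \<tau> k" if "k \<le> l" for k l
    using lift_Suc_antimono_le[of \<tau>] dec that by (meson less_imp_le)
  have "1 - prob (Gamma M phi (\<tau> 0) (\<tau> n)) = prob (space M - Gamma M phi (\<tau> 0) (\<tau> n))"
    using le by (simp add: prob_compl sets_Gamma)
  also have "\<dots> \<le> prob (\<Inter>k<n. space M - Gamma M phi (\<tau> k) (\<tau> (Suc k)))"
  proof (rule finite_measure_mono)
    show "space M - Gamma M phi (\<tau> 0) (\<tau> n) \<subseteq> (\<Inter>k<n. space M - Gamma M phi (\<tau> k) (\<tau> (Suc k)))"
      using le by (intro INT_greatest Diff_mono order.refl Gamma_mono) auto
    show "(\<Inter>k<n. space M - Gamma M phi (\<tau> k) (\<tau> (Suc k))) \<in> events"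
      using False le by (intro sets.finite_INT sets.compl_sets sets_Gamma) auto
  qed
  also have "\<dots> = (\<Prod>k<n. 1 - prob (Gamma M phi (\<tau> k) (\<tau> (Suc k))))"
    using False by (intro prob_INT_not_Gamma_chain ind dec) simp
  finally show ?thesis .
qed

lemma prob_not_Gamma_iterate_le:
  assumes ind: "indep_intervals M phi"
    and f: "\<And>s. f s < s" and fp: "\<And>s. p < prob (Gamma M phi s (f s))"
  shows "1 - prob (Gamma M phi t ((f ^^ n) t)) \<le> (1 - p) ^ n"
proof -
  have "1 - prob (Gamma M phi t ((f ^^ n) t))
      \<le> (\<Prod>k<n. 1 - prob (Gamma M phi ((f ^^ k) t) (f ((f ^^ k) t))))"
    using prob_not_Gamma_le_prod[OF ind, of "\<lambda>k. (f ^^ k) t" n] f by simp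
  also have "\<dots> \<le> (\<Prod>k<n. 1 - p)"
  proof (rule prod_mono)
    fix k
    show "0 \<le> 1 - prob (Gamma M phi ((f ^^ k) t) (f ((f ^^ k) t))) \<and>
        1 - prob (Gamma M phi ((f ^^ k) t) (f ((f ^^ k) t))) \<le> 1 - p"
      using fp[of "(f ^^ k) t"] prob_le_1 by (simp add: less_imp_le)
  qed
  finally show ?thesis
    by simp
qed

lemma cond1_imp_cond3:
  assumes ind: "indep_intervals M phi" and "cond1 M phi"
  shows "cond3 M phi"
proof -
  obtain p where "p > 0" and "\<forall>s. \<exists>s0. s0 < s \<and> p < prob (Gamma M phi s s0)"
    using \<open>cond1 M phi\<close> unfolding cond1_def by blast
  then obtain f where f: "\<And>s. f s < s" and fp: "\<And>s. p < prob (Gamma M phi s (f s))"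
    by metis
  have "p < 1"
    using fp[of 0] prob_le_1[of "Gamma M phi 0 (f 0)"] by linarith
  have "prob (synchronized t) = 1" for t
  proof (rule prob_eq_1_if_geometric_bound)
    fix n
    have "(f ^^ Suc n) t < t"
      using f[of "(f ^^ n) t"] funpow_le_if_decreasing[OF f, of n t] by simp
    then have "prob (Gamma M phi t ((f ^^ Suc n) t)) \<le> prob (synchronized t)"
      by (intro finite_measure_mono Gamma_subset_synchronized sets_synchronized)
    then show "1 - (1 - p) * (1 - p) ^ n \<le> prob (synchronized t)"
      using prob_not_Gamma_iterate_le[OF ind f fp, of t "Suc n"] by simp
  qed (use \<open>p > 0\<close> \<open>p < 1\<close> in auto)
  then show ?thesis
    unfolding cond3_def synchronized_def[symmetric] by simp
qed

lemma Gamma_exponential_rate: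
  assumes ind: "indep_intervals M phi" and "cond1_uniform M phi"
  shows "\<exists>C \<alpha>. \<alpha> > 0 \<and> (\<forall>t t0. t0 \<le> t \<longrightarrow>
    1 - prob (Gamma M phi t t0) \<le> C * exp (- \<alpha> * (t - t0)))"
proof -
  obtain p T where "p > 0" and "\<forall>s. \<exists>s0. s0 < s \<and> s - s0 \<le> T \<and> p < prob (Gamma M phi s s0)"
    using \<open>cond1_uniform M phi\<close> unfolding cond1_uniform_def by blast
  then obtain f where f: "\<And>s. f s < s" and fT: "\<And>s. s - f s \<le> T"
    and fp: "\<And>s. p < prob (Gamma M phi s (f s))"
    by metis
  define q where "q = 1 - p"
  have "p < 1"
    using fp[of 0] prob_le_1[of "Gamma M phi 0 (f 0)"] by linarith
  with \<open>p > 0\<close> have q: "0 < q" "q < 1"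
    by (simp_all add: q_def)
  have "T > 0"
    using f[of 0] fT[of 0] by linarith
  have "1 - prob (Gamma M phi t t0) \<le> (1 / q) * exp (- (- ln q / T) * (t - t0))"
    if "t0 \<le> t" for t t0
  proof -
    define n where "n = nat \<lfloor>(t - t0) / T\<rfloor>"
    have "real n * T \<le> t - t0"
      using that \<open>T > 0\<close> by (simp add: n_def pos_le_divide_eq[symmetric])
    then have "t0 \<le> (f ^^ n) t"
      using funpow_ge_if_bounded_step[OF fT, of t n] by linarith
    then have "1 - prob (Gamma M phi t t0) \<le> 1 - prob (Gamma M phi t ((f ^^ n) t))"
      using funpow_le_if_decreasing[OF f, of n t] that
      by (intro diff_left_mono finite_measure_mono Gamma_mono sets_Gamma) auto
    also have "\<dots> \<le> q ^ n"
      unfolding q_def by (rule prob_not_Gamma_iterate_le[OF ind f fp])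
    also have "\<dots> \<le> exp (- (- ln q / T) * (t - t0)) / q"
      unfolding n_def using q \<open>T > 0\<close> that by (intro power_nat_floor_le_exp) auto
    finally show ?thesis
      by simp
  qed
  moreover have "- ln q / T > 0"
    using q \<open>T > 0\<close> by (simp add: divide_neg_pos)
  ultimately show ?thesis
    by (intro exI[of _ "1 / q"] exI[of _ "- ln q / T"]) simp
qed

lemma pullback_set_eq_INT_nat: "pullback_set phi t w = (\<Inter>n. range (\<lambda>x. phi t (t - real n) x w))"
proof
  show "pullback_set phi t w \<subseteq> (\<Inter>n. range (\<lambda>x. phi t (t - real n) x w))"
    by (intro INT_greatest pullback_set_subset_range) simp
  show "(\<Inter>n. range (\<lambda>x. phi t (t - real n) x w)) \<subseteq> pullback_set phi t w"
    unfolding pullback_set_def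
  proof (rule INT_greatest)
    fix s assume "s \<in> {..t}"
    obtain n :: nat where "t - s \<le> real n"
      using real_arch_simple by blast
    with \<open>s \<in> {..t}\<close> have "range (\<lambda>x. phi t (t - real n) x w) \<subseteq> range (\<lambda>x. phi t s x w)"
      by (intro range_phi_antimono) auto
    then show "(\<Inter>n. range (\<lambda>x. phi t (t - real n) x w)) \<subseteq> range (\<lambda>x. phi t s x w)"
      by blast
  qed
qed

lemma sets_pullback_set:
  "{(x, w). w \<in> space M \<and> x \<in> pullback_set phi t w} \<in> sets (count_space UNIV \<Otimes>\<^sub>M M)"
proof -
  have [measurable]: "(\<lambda>w. phi t (t - real n) y w) \<in> M \<rightarrow>\<^sub>M count_space UNIV" for n y
    by (rule measurable_phi) simp
  have "{(x, w). w \<in> space M \<and> x \<in> pullback_set phi t w} =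
      {z \<in> space (count_space UNIV \<Otimes>\<^sub>M M). \<forall>n::nat. \<exists>y. phi t (t - real n) y (snd z) = fst z}"
    by (auto simp: space_pair_measure pullback_set_eq_INT_nat image_iff eq_commute)
  also have "\<dots> \<in> sets (count_space UNIV \<Otimes>\<^sub>M M)"
    by measurable
  finally show ?thesis .
qed

lemma pullback_set_invariant:
  assumes "t0 \<le> t"
  shows "(\<lambda>x. phi t t0 x w) ` pullback_set phi t0 w = pullback_set phi t w"
proof -
  have "\<forall>\<^sub>F s in at_bot. s \<le> t0 \<and> range (\<lambda>x. phi t0 s x w) = pullback_set phi t0 w
      \<and> range (\<lambda>x. phi t s x w) = pullback_set phi t w"
    by (intro eventually_conj eventually_le_at_bot eventually_range_phi_eq_pullback_set)
  then obtain s where "s \<le> t0" and s0: "range (\<lambda>x. phi t0 s x w) = pullback_set phi t0 w"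
    and s: "range (\<lambda>x. phi t s x w) = pullback_set phi t w"
    using eventually_happens'[OF trivial_limit_at_bot_linorder] by blast
  have "(\<lambda>x. phi t t0 x w) ` range (\<lambda>x. phi t0 s x w) = range (\<lambda>x. phi t s x w)"
    unfolding image_image using phi_cocycle[OF \<open>s \<le> t0\<close> assms] by simp
  then show ?thesis
    by (simp only: s0 s)
qed

lemma hsdist_range_pullback_set_eq_0:
  assumes "w \<in> Gamma M phi t t0" "t0 \<le> t"
  shows "hsdist (range (\<lambda>x. phi t t0 x w)) (pullback_set phi t w) = 0"
proof -
  have "is_singleton (range (\<lambda>x. phi t t0 x w))"
    using assms(1) mem_Gamma_iff by (auto simp: Gamma_def)
  then obtain a where a: "range (\<lambda>x. phi t t0 x w) = {a}"
    by (auto simp: is_singleton_def)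
  then have "pullback_set phi t w = {a}"
    using pullback_set_subset_range[OF assms(2), of w] pullback_set_nonempty[of t w]
    by (metis subset_singletonD)
  with a show ?thesis
    by (simp add: hsdist_def ddist_def)
qed

lemma AE_forward_convergence_to_pullback_set:
  assumes "\<alpha> > 0" and rate: "\<And>t t0. t0 \<le> t \<Longrightarrow> 1 - prob (Gamma M phi t t0) \<le> C * exp (- \<alpha> * (t - t0))"
  shows "AE w in M. ((\<lambda>t. hsdist (range (\<lambda>x. phi t t0 x w)) (pullback_set phi t w)) \<longlongrightarrow> 0) at_top"
proof -
  define E where "E = (\<Union>n. Gamma M phi (t0 + real n) t0)"
  have "prob E = 1"
  proof (rule prob_eq_1_if_geometric_bound)
    fix n
    have "1 - C * exp (- \<alpha>) ^ n \<le> prob (Gamma M phi (t0 + real n) t0)"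
      using rate[of t0 "t0 + real n"] by (simp add: exp_of_nat_mult[symmetric] mult.commute)
    also have "\<dots> \<le> prob E"
      unfolding E_def by (intro finite_measure_mono sets.countable_UN image_subsetI sets_Gamma) auto
    finally show "1 - C * exp (- \<alpha>) ^ n \<le> prob E" .
  qed (use \<open>\<alpha> > 0\<close> in auto)
  then have "AE w in M. w \<in> E"
    by (rule AE_prob_1)
  then show ?thesis
  proof (rule eventually_mono)
    fix w assume "w \<in> E"
    then obtain n where n: "w \<in> Gamma M phi (t0 + real n) t0"
      unfolding E_def by blast
    have "w \<in> Gamma M phi t t0" if "t0 + real n \<le> t" for t
      using n that Gamma_mono[of t0 t0 "t0 + real n" t] by auto
    then have "\<forall>\<^sub>F t in at_top. hsdist (range (\<lambda>x. phi t t0 x w)) (pullback_set phi t w) = 0"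
      unfolding eventually_at_top_linorder
      by (intro exI[of _ "t0 + real n"] allI impI hsdist_range_pullback_set_eq_0) auto
    then show "((\<lambda>t. hsdist (range (\<lambda>x. phi t t0 x w)) (pullback_set phi t w)) \<longlongrightarrow> 0) at_top"
      by (rule tendsto_eventually)
  qed
qed

lemma global_random_forward_attractor_pullback_set:
  assumes "\<alpha> > 0" and "\<And>t t0. t0 \<le> t \<Longrightarrow> 1 - prob (Gamma M phi t t0) \<le> C * exp (- \<alpha> * (t - t0))"
  shows "global_random_forward_attractor M phi (pullback_set phi)"
  unfolding global_random_forward_attractor_def
  using sets_pullback_set pullback_set_invariant AE_forward_convergence_to_pullback_set[OF assms]
  by simp

end

theorem theorem9:
  fixes M :: "'w measure" and phi :: "real \<Rightarrow> real \<Rightarrow> 'a::finite \<Rightarrow> 'w \<Rightarrow> 'a"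
  assumes "prob_space M" and "NRDS M phi"
  shows "(cond2 M phi \<longleftrightarrow> cond3 M phi) \<and> (cond3 M phi \<longleftrightarrow> cond4 M phi)
    \<and> (cond2 M phi \<longrightarrow> cond1 M phi)
    \<and> (indep_intervals M phi \<longrightarrow> (cond1 M phi \<longleftrightarrow> cond2 M phi))
    \<and> (indep_intervals M phi \<and> cond1_uniform M phi \<longrightarrow>
         (\<exists>C \<alpha>. \<alpha> > 0 \<and> (\<forall>t t0. t0 \<le> t \<longrightarrow>
              1 - measure M (Gamma M phi t t0) \<le> C * exp (- \<alpha> * (t - t0))))
         \<and> global_random_forward_attractor M phi (pullback_set phi))"
proof -
  interpret nrds M phi
    using assms by (simp add: nrds_def nrds_axioms_def)
  have "global_random_forward_attractor M phi (pullback_set phi)"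
    if "indep_intervals M phi" "cond1_uniform M phi"
    using Gamma_exponential_rate[OF that] global_random_forward_attractor_pullback_set by blast
  then show ?thesis
    using cond2_iff_cond3 cond3_iff_cond4 cond2_imp_cond1 cond1_imp_cond3 Gamma_exponential_rate
    by blast
qed

end
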